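(* Let $s$ be a coordinate on $\mathbb{P}^1$ and $$y=-\frac{s(s+1)(s-3)^2}{3(s+3)(s-1)^2},\qquad t=-\left(\frac{(s+1)(s-3)}{(s-1)(s+3)}\right)^3.$$ Then, using $t$ as a local coordinate away from its critical points, $y(t)$ is a solution of $\mathrm{P}_{\mathrm{VI}}$ with parameters $(\theta_1,\theta_2,\theta_3,\theta_4)=(1/2,1/3,1/3,1/2)$.
   Context: $\mathrm{P}_{\mathrm{VI}}$ is the equation $$\frac{d^2y}{dt^2}=\frac12\Big(\frac1y+\frac1{y-1}+\frac1{y-t}\Big)\Big(\frac{dy}{dt}\Big)^2-\Big(\frac1t+\frac1{t-1}+\frac1{y-t}\Big)\frac{dy}{dt}+\frac{y(y-1)(y-t)}{t^2(t-1)^2}\Big(\alpha+\beta\frac{t}{y^2}+\gamma\frac{t-1}{(y-1)^2}+\delta\frac{t(t-1)}{(y-t)^2}\Big),$$ with $\alpha=(\theta_4-1)^2/2$, $\beta=-\theta_1^2/2$, $\gamma=\theta_3^2/2$, $\delta=(1-\theta_2^2)/2$. When $y,t$ are given as rational functions of a parameter on a curve, derivatives with respect to $t$ are computed via the chain rule. *)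

theory Defs
  imports "HOL-Analysis.Analysis"
begin

definition PVI_alpha :: "complex \<Rightarrow> complex" where "PVI_alpha th4 = (th4 - 1)^2 / 2"
definition PVI_beta :: "complex \<Rightarrow> complex" where "PVI_beta th1 = - (th1^2) / 2"
definition PVI_gamma :: "complex \<Rightarrow> complex" where "PVI_gamma th3 = th3^2 / 2"
definition PVI_delta :: "complex \<Rightarrow> complex" where "PVI_delta th2 = (1 - th2^2) / 2"

definition PVI_rhs ::
  "complex \<Rightarrow> complex \<Rightarrow> complex \<Rightarrow> complex \<Rightarrow> complex \<Rightarrow> complex \<Rightarrow> complex \<Rightarrow> complex" where
  "PVI_rhs th1 th2 th3 th4 t y y1 =
     (1/2) * (1/y + 1/(y - 1) + 1/(y - t)) * y1^2
     - (1/t + 1/(t - 1) + 1/(y - t)) * y1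
     + (y * (y - 1) * (y - t)) / (t^2 * (t - 1)^2) *
       (PVI_alpha th4 + PVI_beta th1 * t / y^2 + PVI_gamma th3 * (t - 1) / (y - 1)^2
        + PVI_delta th2 * t * (t - 1) / (y - t)^2)"

definition ysol :: "complex \<Rightarrow> complex" where
  "ysol s = - (s * (s + 1) * (s - 3)^2) / (3 * (s + 3) * (s - 1)^2)"

definition tsol :: "complex \<Rightarrow> complex" where
  "tsol s = - ((((s + 1) * (s - 3)) / ((s - 1) * (s + 3)))^3)"

text \<open>Derivatives with respect to t along the curve, via the chain rule.\<close>
definition dy_dt :: "complex \<Rightarrow> complex" where
  "dy_dt s = deriv ysol s / deriv tsol s"

definition d2y_dt2 :: "complex \<Rightarrow> complex" where
  "d2y_dt2 s = deriv dy_dt s / deriv tsol s"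

end

theory Submission
  imports Defs
begin

(* Along the curve, dy/dt = y'(s)/t'(s) is an explicit rational function of s, and d^2y/dt^2 is
   its s-derivative divided by t'(s).  Multiplying P_VI by 2 y (y - 1) (y - t) t^2 (t - 1)^2 turns
   it into a polynomial equation.  Each of y, y - 1, t, t - 1, y - t, dy/dt and d^2y/dt^2 factors
   over the polynomials s - 1, s + 3, s + 1, s - 3, s^2 + 3, s^2 - 3, s^2 - 2 s + 3, s^2 + 2 s + 3
   and two more of degree 4 and 8; after this substitution the polynomial equation becomes a
   monomial in these factors times a polynomial in s that vanishes identically. *)

(* Written in terms of y, y - 1, y - t, t and t - 1 only (hence t - 1 + t for 2 t - 1), so that
   the factorisations of these quantities along the curve can be substituted directly. *)
definition PVI_poly ::
  "complex \<Rightarrow> complex \<Rightarrow> complex \<Rightarrow> complex \<Rightarrow> complex \<Rightarrow> complex \<Rightarrow> complex \<Rightarrow> complex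
    \<Rightarrow> complex"
  where
  "PVI_poly a b c d t y y1 y2 =
     2 * y * (y - 1) * (y - t) * t^2 * (t - 1)^2 * y2
     - t^2 * (t - 1)^2 * ((y - 1) * (y - t) + y * (y - t) + y * (y - 1)) * y1^2
     + 2 * y * (y - 1) * t * (t - 1) * ((t - 1 + t) * (y - t) + t * (t - 1)) * y1
     - 2 * (a * (y * (y - 1) * (y - t))^2 + b * t * ((y - 1) * (y - t))^2
            + c * (t - 1) * (y * (y - t))^2 + d * t * (t - 1) * (y * (y - 1))^2)"

lemma PVI_rhs_cleared:
  assumes "y \<noteq> 0" "y \<noteq> 1" "y \<noteq> t" "t \<noteq> 0" "t \<noteq> 1"
  shows "2 * y * (y - 1) * (y - t) * t^2 * (t - 1)^2 * (y2 - PVI_rhs th1 th2 th3 th4 t y y1)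
       = PVI_poly (PVI_alpha th4) (PVI_beta th1) (PVI_gamma th3) (PVI_delta th2) t y y1 y2"
proof -
  \<comment> \<open>With y - 1, y - t, t - 1 replaced by independent variables, field_simps does not
     split these denominators.\<close>
  have cleared: "2 * y * u * v * t^2 * w^2 *
      (y2 - ((1/2) * (1/y + 1/u + 1/v) * y1^2 - (1/t + 1/w + 1/v) * y1
             + (y * u * v) / (t^2 * w^2) * (a + b * t / y^2 + c * w / u^2 + d * t * w / v^2)))
    = 2 * y * u * v * t^2 * w^2 * y2 - t^2 * w^2 * (u * v + y * v + y * u) * y1^2
      + 2 * y * u * t * w * ((w + t) * v + t * w) * y1
      - 2 * (a * (y * u * v)^2 + b * t * (u * v)^2 + c * w * (y * v)^2 + d * t * w * (y * u)^2)"
    if "u \<noteq> 0" "v \<noteq> 0" "w \<noteq> 0" for u v w a b c d :: complex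
    using that assms by (simp add: field_simps power2_eq_square)
  have "y - 1 \<noteq> 0" "y - t \<noteq> 0" "t - 1 \<noteq> 0" using assms by auto
  from cleared[OF this] show ?thesis
    unfolding PVI_rhs_def PVI_poly_def by simp
qed

lemma PVI_rhs_eqI:
  assumes "y \<noteq> 0" "y \<noteq> 1" "y \<noteq> t" "t \<noteq> 0" "t \<noteq> 1"
    and "PVI_poly (PVI_alpha th4) (PVI_beta th1) (PVI_gamma th3) (PVI_delta th2) t y y1 y2 = 0"
  shows "y2 = PVI_rhs th1 th2 th3 th4 t y y1"
  using PVI_rhs_cleared[OF assms(1-5), of y2 th1 th2 th3 th4 y1] assms by simp

lemma has_field_derivative_divideI:
  fixes f g :: "'a::real_normed_field \<Rightarrow> 'a"
  assumes "(f has_field_derivative f') (at x)" "(g has_field_derivative g') (at x)"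
    and "g x \<noteq> 0" "d \<noteq> 0" "(f' * g x - f x * g') * d = n * (g x)^2"
  shows "((\<lambda>x. f x / g x) has_field_derivative n / d) (at x)"
proof -
  have "(f' * g x - f x * g') / (g x * g x) = n / d"
    using assms(3-5) by (simp add: frac_eq_eq power2_eq_square)
  with DERIV_divide[OF assms(1-3)] show ?thesis by simp
qed

definition ysol' :: "complex \<Rightarrow> complex" where
  "ysol' s = - (s - 3) * (s^4 + 6 * s^3 - 2 * s^2 + 18 * s + 9) / (3 * (s + 3)^2 * (s - 1)^3)"

definition tsol' :: "complex \<Rightarrow> complex" where
  "tsol' s = - 12 * ((s + 1) * (s - 3))^2 * (s^2 + 3) / ((s - 1) * (s + 3))^4"

definition slope :: "complex \<Rightarrow> complex" where
  "slope s = (s - 1) * (s + 3)^2 * (s^4 + 6 * s^3 - 2 * s^2 + 18 * s + 9)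
             / (36 * (s + 1)^2 * (s - 3) * (s^2 + 3))"

definition slope' :: "complex \<Rightarrow> complex" where
  "slope' s = s * (s + 3) * (s^8 - 18 * s^6 - 224 * s^4 - 270 * s^2 - 513)
              / (18 * (s + 1)^3 * (s - 3)^2 * (s^2 + 3)^2)"

lemma has_field_derivative_ysol:
  assumes "s \<noteq> 1" "s \<noteq> -3"
  shows "(ysol has_field_derivative ysol' s) (at s)"
  unfolding ysol_def[abs_def] ysol'_def
proof (rule has_field_derivative_divideI)
  show "3 * (s + 3) * (s - 1)^2 \<noteq> 0" "3 * (s + 3)^2 * (s - 1)^3 \<noteq> 0"
    using assms by (auto simp: add_eq_0_iff2)
qed ((rule derivative_eq_intros refl)+, simp, algebra)

lemma has_field_derivative_tsol:
  assumes "s \<noteq> 1" "s \<noteq> -3"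
  shows "(tsol has_field_derivative tsol' s) (at s)"
proof -
  have "tsol = (\<lambda>s. - (((s + 1) * (s - 3))^3) / ((s - 1) * (s + 3))^3)"
    unfolding tsol_def by (simp add: power_divide)
  moreover have "((\<lambda>s. - (((s + 1) * (s - 3))^3) / ((s - 1) * (s + 3))^3)
                   has_field_derivative tsol' s) (at s)"
    unfolding tsol'_def
  proof (rule has_field_derivative_divideI)
    show "((s - 1) * (s + 3))^3 \<noteq> 0" "((s - 1) * (s + 3))^4 \<noteq> 0"
      using assms by (auto simp: add_eq_0_iff2)
  qed ((rule derivative_eq_intros refl)+, simp, algebra)
  ultimately show ?thesis by simp
qed

lemma has_field_derivative_slope:
  assumes "s + 1 \<noteq> 0" "s - 3 \<noteq> 0" "s^2 + 3 \<noteq> 0"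
  shows "(slope has_field_derivative slope' s) (at s)"
  unfolding slope_def[abs_def] slope'_def
proof (rule has_field_derivative_divideI)
  show "36 * (s + 1)^2 * (s - 3) * (s^2 + 3) \<noteq> 0"
    "18 * (s + 1)^3 * (s - 3)^2 * (s^2 + 3)^2 \<noteq> 0"
    using assms by auto
qed ((rule derivative_eq_intros refl)+, simp, algebra)

lemma tsol'_eq_0_iff:
  assumes "s \<noteq> 1" "s \<noteq> -3"
  shows "tsol' s = 0 \<longleftrightarrow> s + 1 = 0 \<or> s - 3 = 0 \<or> s^2 + 3 = 0"
  using assms by (auto simp: tsol'_def add_eq_0_iff2)

(* Where tsol' s = 0, the denominator of slope s vanishes too, so both sides are 0; hence the
   identity holds on the whole open set s \<notin> {1, -3}. *)
lemma ysol'_divide_tsol':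
  assumes "s \<noteq> 1" "s \<noteq> -3"
  shows "ysol' s / tsol' s = slope s"
proof (cases "tsol' s = 0")
  case True
  then show ?thesis using tsol'_eq_0_iff[OF assms] by (auto simp: slope_def)
next
  case False
  then have
    "3 * (s + 3)^2 * (s - 1)^3 * (- 12 * ((s + 1) * (s - 3))^2 * (s^2 + 3)) \<noteq> 0"
    "36 * (s + 1)^2 * (s - 3) * (s^2 + 3) \<noteq> 0"
    using assms tsol'_eq_0_iff[OF assms] by (auto simp: add_eq_0_iff2)
  then show ?thesis
    unfolding ysol'_def tsol'_def slope_def divide_divide_times_eq
    by (simp only: frac_eq_eq not_False_eq_True) algebra
qed

lemma dy_dt_eq_slope:
  assumes "s \<noteq> 1" "s \<noteq> -3"
  shows "dy_dt s = slope s"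
proof -
  have "deriv ysol s = ysol' s" "deriv tsol s = tsol' s"
    using assms by (auto intro: DERIV_imp_deriv has_field_derivative_ysol has_field_derivative_tsol)
  then show ?thesis using ysol'_divide_tsol'[OF assms] by (simp add: dy_dt_def)
qed

lemma deriv_dy_dt:
  assumes "s \<noteq> 1" "s \<noteq> -3" "s + 1 \<noteq> 0" "s - 3 \<noteq> 0" "s^2 + 3 \<noteq> 0"
  shows "deriv dy_dt s = slope' s"
proof -
  have "eventually (\<lambda>z. z \<in> - {1, -3}) (nhds s)"
    using assms(1,2) by (intro eventually_nhds_in_open) auto
  then have "eventually (\<lambda>z. dy_dt z = slope z) (nhds s)"
    by eventually_elim (simp add: dy_dt_eq_slope)
  then have "deriv dy_dt s = deriv slope s"
    by (rule deriv_cong_ev) (rule refl)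
  also have "\<dots> = slope' s"
    using has_field_derivative_slope[OF assms(3-5)] by (rule DERIV_imp_deriv)
  finally show ?thesis .
qed

lemma ysol_tsol_factored:
  assumes "s \<noteq> 1" "s \<noteq> -3"
  shows "ysol s - 1 = - (s^2 + 3) * (s^2 - 2 * s + 3) / (3 * (s - 1)^2 * (s + 3))"
    and "tsol s - 1 = - 2 * (s^2 + 3)^2 * (s^2 - 3) / ((s - 1)^3 * (s + 3)^3)"
    and "ysol s - tsol s = - (s + 1) * (s - 3)^2 * (s^2 + 3) * (s^2 + 2 * s + 3)
                           / (3 * (s - 1)^3 * (s + 3)^3)"
proof -
  have "s - 1 \<noteq> 0" "s + 3 \<noteq> 0" using assms by (auto simp: add_eq_0_iff2)
  then have nz: "3 * (s + 3) * (s - 1)^2 \<noteq> 0" "3 * (s - 1)^2 * (s + 3) \<noteq> 0"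
    "((s - 1) * (s + 3))^3 \<noteq> 0" "(s - 1)^3 * (s + 3)^3 \<noteq> 0" "3 * (s - 1)^3 * (s + 3)^3 \<noteq> 0"
    "3 * (s + 3) * (s - 1)^2 * ((s - 1) * (s + 3))^3 \<noteq> 0"
    by (simp_all del: distrib_left_numeral)
  have y: "ysol s = - (s * (s + 1) * (s - 3)^2) / (3 * (s + 3) * (s - 1)^2)"
    and t: "tsol s = - (((s + 1) * (s - 3))^3) / ((s - 1) * (s + 3))^3"
    unfolding ysol_def tsol_def by (simp_all add: power_divide)
  show "ysol s - 1 = - (s^2 + 3) * (s^2 - 2 * s + 3) / (3 * (s - 1)^2 * (s + 3))"
    unfolding y divide_diff_eq_iff[OF nz(1)] frac_eq_eq[OF nz(1,2)] by algebra
  show "tsol s - 1 = - 2 * (s^2 + 3)^2 * (s^2 - 3) / ((s - 1)^3 * (s + 3)^3)"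
    unfolding t divide_diff_eq_iff[OF nz(3)] frac_eq_eq[OF nz(3,4)] by algebra
  show "ysol s - tsol s = - (s + 1) * (s - 3)^2 * (s^2 + 3) * (s^2 + 2 * s + 3)
                          / (3 * (s - 1)^3 * (s + 3)^3)"
    unfolding y t diff_frac_eq[OF nz(1,3)] frac_eq_eq[OF nz(6,5)] by algebra
qed

lemma slope'_divide_tsol':
  assumes "s \<noteq> 1" "s \<noteq> -3" "s + 1 \<noteq> 0" "s - 3 \<noteq> 0" "s^2 + 3 \<noteq> 0"
  shows "slope' s / tsol' s =
    - s * (s - 1)^4 * (s + 3)^5 * (s^8 - 18 * s^6 - 224 * s^4 - 270 * s^2 - 513)
      / (216 * (s + 1)^5 * (s - 3)^4 * (s^2 + 3)^3)"
proof -
  have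
    "18 * (s + 1)^3 * (s - 3)^2 * (s^2 + 3)^2 * (- 12 * ((s + 1) * (s - 3))^2 * (s^2 + 3)) \<noteq> 0"
    "216 * (s + 1)^5 * (s - 3)^4 * (s^2 + 3)^3 \<noteq> 0"
    using assms by (auto simp: add_eq_0_iff2)
  then show ?thesis
    unfolding slope'_def tsol'_def divide_divide_times_eq
    by (simp only: frac_eq_eq not_False_eq_True) algebra
qed

definition residual ::
  "complex \<Rightarrow> complex \<Rightarrow> complex \<Rightarrow> complex \<Rightarrow> complex \<Rightarrow> complex \<Rightarrow> complex \<Rightarrow> complex
    \<Rightarrow> complex \<Rightarrow> complex \<Rightarrow> complex \<Rightarrow> complex"
  where
  "residual s p1 m1 p3 m3 r u q w g h =
     (1/729) * (u * q * w^2 * h * s^2)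
     - (1/2916) * (g^2 * w^2 * u * q * r)
     - (1/2916) * (g^2 * w^2 * q * p1 * m3^2 * s)
     - (1/2916) * (g^2 * w^2 * u * m1 * p3^2 * s)
     + (2/243) * (u * w^2 * q * g * r^2 * s)
     + (1/243) * (u * w * q * g * p1^3 * m3^3 * s)
     + (2/81) * (u * w^2 * g * p1^2 * m3 * r * s)
     - (1/2916) * (u^2 * q^2 * m1 * p3^2 * p1 * m3^2 * r * s^2)
     - (1/324) * (u^2 * q^2 * m1^2 * p3 * p1^2 * m3 * r)
     + (2/729) * (w * q^2 * m1^2 * p3 * p1 * m3^2 * r * s^2)
     - (16/729) * (w * u^2 * m1 * p3^2 * p1^2 * m3 * r * s^2)"

(* The factors p1 = s + 1, m1 = s - 1, ..., h of the curve are kept as independent variables, so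
   that field_simps clears denominators without expanding them; residual is the cofactor left over.
   The hypotheses are only consistent for the factors of the curve. *)
lemma PVI_poly_substitute:
  fixes s p1 m1 p3 m3 r u q w g h t y y1 y2 :: complex
  assumes nz: "p1 \<noteq> 0" "m1 \<noteq> 0" "p3 \<noteq> 0" "m3 \<noteq> 0" "r \<noteq> 0"
    and y: "y = - (s * p1 * m3^2) / (3 * p3 * m1^2)"
    and t: "t = - (((p1 * m3) / (m1 * p3))^3)"
    and y_1: "y - 1 = - r * u / (3 * m1^2 * p3)"
    and t_1: "t - 1 = - 2 * r^2 * w / (m1^3 * p3^3)"
    and y_t: "y - t = - p1 * m3^2 * r * q / (3 * m1^3 * p3^3)"
    and y1: "y1 = m1 * p3^2 * g / (36 * p1^2 * m3 * r)"
    and y2: "y2 = - s * m1^4 * p3^5 * h / (216 * p1^5 * m3^4 * r^3)"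
  shows "PVI_poly (1/8) (-1/8) (1/18) (4/9) t y y1 y2
    = p1^3 * m3^6 * r^3 / (m1^15 * p3^12) * residual s p1 m1 p3 m3 r u q w g h"
  unfolding PVI_poly_def residual_def unfolding y_1 t_1 y_t unfolding y t y1 y2
  using nz by (simp add: field_simps) algebra

lemma residual_curve:
  "residual s (s + 1) (s - 1) (s + 3) (s - 3) (s^2 + 3) (s^2 - 2 * s + 3) (s^2 + 2 * s + 3) (s^2 - 3)
     (s^4 + 6 * s^3 - 2 * s^2 + 18 * s + 9) (s^8 - 18 * s^6 - 224 * s^4 - 270 * s^2 - 513) = 0"
  unfolding residual_def by algebra

lemma PVI_poly_curve:
  assumes "s \<noteq> 1" "s \<noteq> -3" "s + 1 \<noteq> 0" "s - 3 \<noteq> 0" "s^2 + 3 \<noteq> 0"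
  shows "PVI_poly (1/8) (-1/8) (1/18) (4/9) (tsol s) (ysol s) (slope s) (slope' s / tsol' s) = 0"
proof -
  have "s - 1 \<noteq> 0" "s + 3 \<noteq> 0" using assms(1,2) by (auto simp: add_eq_0_iff2)
  from PVI_poly_substitute[OF assms(3) this(1) this(2) assms(4,5) ysol_def tsol_def
      ysol_tsol_factored[OF assms(1,2)] slope_def slope'_divide_tsol'[OF assms]]
  show ?thesis by (simp only: residual_curve mult_zero_right)
qed

theorem mainTheorem5:
  fixes s :: complex
  assumes "s \<noteq> 1" and "s \<noteq> -3"
    and "deriv tsol s \<noteq> 0"
    and "tsol s \<noteq> 0" and "tsol s \<noteq> 1"
    and "ysol s \<noteq> 0" and "ysol s \<noteq> 1" and "ysol s \<noteq> tsol s"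
  shows "d2y_dt2 s = PVI_rhs (1/2) (1/3) (1/3) (1/2) (tsol s) (ysol s) (dy_dt s)"
proof -
  have deriv_tsol: "deriv tsol s = tsol' s"
    using has_field_derivative_tsol[OF assms(1,2)] by (rule DERIV_imp_deriv)
  with assms(3) have nz: "s + 1 \<noteq> 0" "s - 3 \<noteq> 0" "s^2 + 3 \<noteq> 0"
    using tsol'_eq_0_iff[OF assms(1,2)] by auto
  have params: "PVI_alpha (1/2) = 1/8" "PVI_beta (1/2) = -1/8"
    "PVI_gamma (1/3) = 1/18" "PVI_delta (1/3) = 4/9"
    by (simp_all add: PVI_alpha_def PVI_beta_def PVI_gamma_def PVI_delta_def power2_eq_square)
  have "d2y_dt2 s = slope' s / tsol' s"
    using assms(1,2) nz by (simp add: d2y_dt2_def deriv_tsol deriv_dy_dt)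
  also have "\<dots> = PVI_rhs (1/2) (1/3) (1/3) (1/2) (tsol s) (ysol s) (slope s)"
    using assms(4-8) PVI_poly_curve[OF assms(1,2) nz] by (intro PVI_rhs_eqI) (simp_all add: params)
  finally show ?thesis
    by (simp only: dy_dt_eq_slope[OF assms(1,2)])
qed

end
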